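(* Let $\mathbb{S}$ be a commutative semigroup with unit $0$, let $T=\{T_s\}_{s\in\mathbb{S}}$ be a CP-semigroup on $\mathcal{B}(H)$, and let $(p,K,\mathcal{B},\theta)$ be a minimal dilation of $T$. Then $\mathcal{B}=\mathcal{B}(K)$.
   Context: A CP-semigroup over $\mathbb{S}$ on a von Neumann algebra $\mathcal{A}\subseteq\mathcal{B}(H)$ is a family $T=\{T_s\}_{s\in\mathbb{S}}$ of normal contractive completely positive maps on $\mathcal{A}$ with $T_0=\mathrm{id}_{\mathcal{A}}$ and $T_s\circ T_t=T_{s+t}$. An E-semigroup is a CP-semigroup consisting of $*$-endomorphisms. A dilation of $T$ is a quadruple $(p,K,\mathcal{B},\theta)$ where $K\supseteq H$ is a Hilbert space, $\mathcal{B}\subseteq\mathcal{B}(K)$ is a von Neumann algebra, $p\in\mathcal{B}$ is the orthogonal projection $K\to H$, $\mathcal{A}=p\mathcal{B}p$, and $\theta=\{\theta_s\}_{s\in\mathbb{S}}$ is an E-semigroup on $\mathcal{B}$ with $T_s(a)=p\theta_s(a)p$ for all $a\in\mathcal{A}$, $s\in\mathbb{S}$. The dilation is minimal if the von Neumann algebra generated by $\bigcup_{s}\theta_s(\mathcal{A})$ is $\mathcal{B}$ and the central carrier of $p$ in $\mathcal{B}$ (the smallest projection $q\in\mathcal{B}\cap\mathcal{B}'$ with $qp=p$) equals $1_{\mathcal{B}}$. *)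

theory Defs
  imports Complex_Main
begin

class chilbert = ab_group_add +
  fixes scaleC :: "complex \<Rightarrow> 'a \<Rightarrow> 'a" (infixr "*\<^sub>C" 75)
    and cinner :: "'a \<Rightarrow> 'a \<Rightarrow> complex"
  assumes scaleC_add_right: "c *\<^sub>C (x + y) = c *\<^sub>C x + c *\<^sub>C y"
    and scaleC_add_left: "(c + d) *\<^sub>C x = c *\<^sub>C x + d *\<^sub>C x"
    and scaleC_scaleC: "c *\<^sub>C (d *\<^sub>C x) = (c * d) *\<^sub>C x"
    and scaleC_one: "1 *\<^sub>C x = x"
    and cinner_add_right: "cinner x (y + z) = cinner x y + cinner x z"
    and cinner_scaleC_right: "cinner x (c *\<^sub>C y) = c * cinner x y"
    and cinner_commute: "cinner y x = cnj (cinner x y)"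
    and cinner_pos: "x \<noteq> 0 \<Longrightarrow> 0 < Re (cinner x x)"
    and complete:
      "(\<forall>e>0. \<exists>N::nat. \<forall>m\<ge>N. \<forall>n\<ge>N. sqrt (Re (cinner ((X::nat\<Rightarrow>'a) m - X n) (X m - X n))) < e)
       \<Longrightarrow> (\<exists>L. \<forall>e>0. \<exists>N::nat. \<forall>n\<ge>N. sqrt (Re (cinner (X n - L) (X n - L))) < e)"

definition cnorm :: "'k::chilbert \<Rightarrow> real" where
  "cnorm x = sqrt (Re (cinner x x))"

definition closed_subspace :: "'k::chilbert set \<Rightarrow> bool" where
  "closed_subspace H \<longleftrightarrow> 0 \<in> H \<and> (\<forall>x\<in>H. \<forall>y\<in>H. x + y \<in> H)
     \<and> (\<forall>c. \<forall>x\<in>H. c *\<^sub>C x \<in> H)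
     \<and> (\<forall>X L. (\<forall>n. X n \<in> H) \<and> (\<lambda>n. cnorm (X n - L)) \<longlonglongrightarrow> 0 \<longrightarrow> L \<in> H)"

definition clinear :: "('k::chilbert \<Rightarrow> 'k) \<Rightarrow> bool" where
  "clinear f \<longleftrightarrow> (\<forall>x y. f (x + y) = f x + f y) \<and> (\<forall>c x. f (c *\<^sub>C x) = c *\<^sub>C f x)"

definition BK :: "('k::chilbert \<Rightarrow> 'k) set" where
  "BK = {f. clinear f \<and> (\<exists>M. \<forall>x. cnorm (f x) \<le> M * cnorm x)}"

definition adj :: "('k::chilbert \<Rightarrow> 'k) \<Rightarrow> ('k \<Rightarrow> 'k)" where
  "adj f = (THE g. \<forall>x y. cinner (f x) y = cinner x (g y))"

definition opnorm :: "('k::chilbert \<Rightarrow> 'k) \<Rightarrow> real" where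
  "opnorm f = Sup {cnorm (f x) | x. cnorm x \<le> 1}"

definition selfadj :: "('k::chilbert \<Rightarrow> 'k) \<Rightarrow> bool" where
  "selfadj a \<longleftrightarrow> (\<forall>x y. cinner (a x) y = cinner x (a y))"

definition pos_op :: "('k::chilbert \<Rightarrow> 'k) \<Rightarrow> bool" where
  "pos_op a \<longleftrightarrow> (\<forall>x. Im (cinner x (a x)) = 0 \<and> 0 \<le> Re (cinner x (a x)))"

definition op_le :: "('k::chilbert \<Rightarrow> 'k) \<Rightarrow> ('k \<Rightarrow> 'k) \<Rightarrow> bool" where
  "op_le a b \<longleftrightarrow> pos_op (\<lambda>x. b x - a x)"

definition is_projection :: "('k::chilbert \<Rightarrow> 'k) \<Rightarrow> bool" where
  "is_projection p \<longleftrightarrow> p \<in> BK \<and> p \<circ> p = p \<and> adj p = p"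

text \<open>Operators on a closed subspace H, identified with operators on K that
  map into H and vanish on the orthogonal complement of H (i.e. B(H) = pB(K)p).\<close>
definition ops_on :: "'k::chilbert set \<Rightarrow> ('k \<Rightarrow> 'k) set" where
  "ops_on H = {a \<in> BK. (\<forall>x. a x \<in> H) \<and> (\<forall>x. (\<forall>h\<in>H. cinner h x = 0) \<longrightarrow> a x = 0)}"

definition commutant :: "('k::chilbert \<Rightarrow> 'k) set \<Rightarrow> ('k \<Rightarrow> 'k) set" where
  "commutant S = {b \<in> BK. \<forall>a\<in>S. a \<circ> b = b \<circ> a}"

definition vN_algebra :: "('k::chilbert \<Rightarrow> 'k) set \<Rightarrow> bool" where
  "vN_algebra M \<longleftrightarrow> M \<subseteq> BK \<and> (\<forall>a\<in>M. adj a \<in> M) \<and> commutant (commutant M) = M"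

definition vN_generated :: "('k::chilbert \<Rightarrow> 'k) set \<Rightarrow> ('k \<Rightarrow> 'k) set" where
  "vN_generated S = \<Inter> {M. vN_algebra M \<and> S \<subseteq> M}"

definition is_central_carrier ::
  "('k::chilbert \<Rightarrow> 'k) set \<Rightarrow> ('k \<Rightarrow> 'k) \<Rightarrow> ('k \<Rightarrow> 'k) \<Rightarrow> bool" where
  "is_central_carrier B p q \<longleftrightarrow>
     q \<in> B \<inter> commutant B \<and> is_projection q \<and> q \<circ> p = p \<and>
     (\<forall>q'. q' \<in> B \<inter> commutant B \<and> is_projection q' \<and> q' \<circ> p = p \<longrightarrow> op_le q q')"

definition central_carrier :: "('k::chilbert \<Rightarrow> 'k) set \<Rightarrow> ('k \<Rightarrow> 'k) \<Rightarrow> ('k \<Rightarrow> 'k)" where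
  "central_carrier B p = (THE q. is_central_carrier B p q)"

definition linear_on :: "('k::chilbert \<Rightarrow> 'k) set \<Rightarrow> (('k \<Rightarrow> 'k) \<Rightarrow> ('k \<Rightarrow> 'k)) \<Rightarrow> bool" where
  "linear_on M \<phi> \<longleftrightarrow> (\<forall>a\<in>M. \<forall>b\<in>M. \<phi> (\<lambda>x. a x + b x) = (\<lambda>x. \<phi> a x + \<phi> b x))
     \<and> (\<forall>c. \<forall>a\<in>M. \<phi> (\<lambda>x. c *\<^sub>C a x) = (\<lambda>x. c *\<^sub>C \<phi> a x))"

definition pos_mat :: "nat \<Rightarrow> (nat \<Rightarrow> nat \<Rightarrow> ('k::chilbert \<Rightarrow> 'k)) \<Rightarrow> bool" where
  "pos_mat n a \<longleftrightarrow> (\<forall>\<xi> :: nat \<Rightarrow> 'k.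
     Im (\<Sum>i<n. \<Sum>j<n. cinner (\<xi> i) (a i j (\<xi> j))) = 0 \<and>
     0 \<le> Re (\<Sum>i<n. \<Sum>j<n. cinner (\<xi> i) (a i j (\<xi> j))))"

definition cp_map :: "('k::chilbert \<Rightarrow> 'k) set \<Rightarrow> (('k \<Rightarrow> 'k) \<Rightarrow> ('k \<Rightarrow> 'k)) \<Rightarrow> bool" where
  "cp_map M \<phi> \<longleftrightarrow> linear_on M \<phi> \<and>
     (\<forall>n a. (\<forall>i<n. \<forall>j<n. a i j \<in> M) \<and> pos_mat n a \<longrightarrow> pos_mat n (\<lambda>i j. \<phi> (a i j)))"

definition contractive_on :: "('k::chilbert \<Rightarrow> 'k) set \<Rightarrow> (('k \<Rightarrow> 'k) \<Rightarrow> ('k \<Rightarrow> 'k)) \<Rightarrow> bool" where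
  "contractive_on M \<phi> \<longleftrightarrow> (\<forall>a\<in>M. opnorm (\<phi> a) \<le> opnorm a)"

definition op_lub :: "('k::chilbert \<Rightarrow> 'k) set \<Rightarrow> ('k \<Rightarrow> 'k) \<Rightarrow> bool" where
  "op_lub D a \<longleftrightarrow> a \<in> BK \<and> selfadj a \<and> (\<forall>d\<in>D. op_le d a) \<and>
     (\<forall>b\<in>BK. selfadj b \<and> (\<forall>d\<in>D. op_le d b) \<longrightarrow> op_le a b)"

text \<open>Normality: preservation of suprema of bounded increasing nets of positive
  operators (nets represented by their upward-directed ranges).\<close>
definition normal_on :: "('k::chilbert \<Rightarrow> 'k) set \<Rightarrow> (('k \<Rightarrow> 'k) \<Rightarrow> ('k \<Rightarrow> 'k)) \<Rightarrow> bool" where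
  "normal_on M \<phi> \<longleftrightarrow> (\<forall>D a. D \<subseteq> M \<and> D \<noteq> {} \<and> (\<forall>d\<in>D. pos_op d) \<and>
       (\<forall>x\<in>D. \<forall>y\<in>D. \<exists>z\<in>D. op_le x z \<and> op_le y z) \<and> a \<in> M \<and> op_lub D a
     \<longrightarrow> op_lub (\<phi> ` D) (\<phi> a))"

definition cp_semigroup ::
  "('k::chilbert \<Rightarrow> 'k) set \<Rightarrow> ('s::comm_monoid_add \<Rightarrow> ('k \<Rightarrow> 'k) \<Rightarrow> ('k \<Rightarrow> 'k)) \<Rightarrow> bool" where
  "cp_semigroup M T \<longleftrightarrow>
     (\<forall>s. \<forall>a\<in>M. T s a \<in> M) \<and>
     (\<forall>s. normal_on M (T s) \<and> contractive_on M (T s) \<and> cp_map M (T s)) \<and>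
     (\<forall>a\<in>M. T 0 a = a) \<and>
     (\<forall>s t. \<forall>a\<in>M. T s (T t a) = T (s + t) a)"

definition e_semigroup ::
  "('k::chilbert \<Rightarrow> 'k) set \<Rightarrow> ('s::comm_monoid_add \<Rightarrow> ('k \<Rightarrow> 'k) \<Rightarrow> ('k \<Rightarrow> 'k)) \<Rightarrow> bool" where
  "e_semigroup M \<theta> \<longleftrightarrow> cp_semigroup M \<theta> \<and>
     (\<forall>s. \<forall>a\<in>M. \<forall>b\<in>M. \<theta> s (a \<circ> b) = \<theta> s a \<circ> \<theta> s b) \<and>
     (\<forall>s. \<forall>a\<in>M. \<theta> s (adj a) = adj (\<theta> s a))"

text \<open>\<open>dilation H A T p B \<theta>\<close>: the algebra A of operators on the closed subspace
  H of K (A represented inside B(K), supported on H) has the dilation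
  (p, K, B, \<theta>), K being the type 'k.\<close>
definition dilation ::
  "'k::chilbert set \<Rightarrow> ('k \<Rightarrow> 'k) set \<Rightarrow> ('s::comm_monoid_add \<Rightarrow> ('k \<Rightarrow> 'k) \<Rightarrow> ('k \<Rightarrow> 'k))
   \<Rightarrow> ('k \<Rightarrow> 'k) \<Rightarrow> ('k \<Rightarrow> 'k) set \<Rightarrow> ('s \<Rightarrow> ('k \<Rightarrow> 'k) \<Rightarrow> ('k \<Rightarrow> 'k)) \<Rightarrow> bool" where
  "dilation H A T p B \<theta> \<longleftrightarrow>
     vN_algebra B \<and> p \<in> B \<and> is_projection p \<and> range p = H \<and>
     A = {p \<circ> b \<circ> p | b. b \<in> B} \<and>
     e_semigroup B \<theta> \<and>
     (\<forall>s. \<forall>a\<in>A. T s a = p \<circ> \<theta> s a \<circ> p)"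

definition minimal_dilation ::
  "'k::chilbert set \<Rightarrow> ('k \<Rightarrow> 'k) set \<Rightarrow> ('s::comm_monoid_add \<Rightarrow> ('k \<Rightarrow> 'k) \<Rightarrow> ('k \<Rightarrow> 'k))
   \<Rightarrow> ('k \<Rightarrow> 'k) \<Rightarrow> ('k \<Rightarrow> 'k) set \<Rightarrow> ('s \<Rightarrow> ('k \<Rightarrow> 'k) \<Rightarrow> ('k \<Rightarrow> 'k)) \<Rightarrow> bool" where
  "minimal_dilation H A T p B \<theta> \<longleftrightarrow>
     dilation H A T p B \<theta> \<and>
     vN_generated (\<Union>s. \<theta> s ` A) = B \<and>
     central_carrier B p = id"

end

theory Submission
  imports Defs
begin

text \<open>Every operator \<open>c\<close> in the commutant \<open>B'\<close> commutes with the compressions \<open>p b p\<close>,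
  which exhaust \<open>B(H)\<close>. Commuting with all rank-one operators on \<open>H\<close>, \<open>c\<close> acts on \<open>H\<close>
  as a scalar \<open>\<gamma>\<close>, hence also on \<open>B H\<close> and on its closed span \<open>[B H]\<close>. The projection
  onto \<open>[B H]\<close> is the central carrier of \<open>p\<close>, which minimality makes \<open>1\<close>; so
  \<open>[B H] = K\<close>, \<open>B' = \<complex>1\<close>, and by the bicommutant property \<open>B = B'' = B(K)\<close>.\<close>

section \<open>Inner product algebra\<close>

lemma scaleC_zero_left [simp]: "(0::complex) *\<^sub>C (x::'a::chilbert) = 0"
proof -
  have "0 *\<^sub>C x = 0 *\<^sub>C x + 0 *\<^sub>C x" using scaleC_add_left[of 0 0 x] by simp
  thus ?thesis by simp
qed

lemma scaleC_zero_right [simp]: "c *\<^sub>C (0::'a::chilbert) = 0"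
proof -
  have "c *\<^sub>C (0::'a) = c *\<^sub>C 0 + c *\<^sub>C 0" using scaleC_add_right[of c 0 0] by simp
  thus ?thesis by simp
qed

lemma scaleC_minus_right: "c *\<^sub>C (- (x::'a::chilbert)) = - (c *\<^sub>C x)"
  using scaleC_add_right[of c "-x" x] by (simp add: eq_neg_iff_add_eq_0)

lemma scaleC_diff_right: "c *\<^sub>C ((x::'a::chilbert) - y) = c *\<^sub>C x - c *\<^sub>C y"
  using scaleC_add_right[of c x "-y"] by (simp add: scaleC_minus_right)

lemma scaleC_minus_left: "(- c) *\<^sub>C (x::'a::chilbert) = - (c *\<^sub>C x)"
  using scaleC_add_left[of "-c" c x] by (simp add: eq_neg_iff_add_eq_0)

lemma two_scaleC: "(2::complex) *\<^sub>C (x::'a::chilbert) = x + x"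
  using scaleC_add_left[of 1 1 x] by (simp add: scaleC_one)

lemma cinner_zero_right [simp]: "cinner x (0::'a::chilbert) = 0"
  using cinner_add_right[of x 0 0] by simp

lemma cinner_zero_left [simp]: "cinner (0::'a::chilbert) x = 0"
  using cinner_commute[of x 0] by simp

lemma cinner_add_left: "cinner ((x::'a::chilbert) + y) z = cinner x z + cinner y z"
  by (metis cinner_add_right cinner_commute complex_cnj_add)

lemma cinner_scaleC_left: "cinner (c *\<^sub>C (x::'a::chilbert)) y = cnj c * cinner x y"
  by (metis cinner_commute cinner_scaleC_right complex_cnj_mult)

lemma cinner_minus_right: "cinner x (- (y::'a::chilbert)) = - cinner x y"
  using cinner_add_right[of x "-y" y] by (simp add: eq_neg_iff_add_eq_0)

lemma cinner_minus_left: "cinner (- (x::'a::chilbert)) y = - cinner x y"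
  using cinner_add_left[of "-x" x y] by (simp add: eq_neg_iff_add_eq_0)

lemma cinner_diff_right: "cinner x ((y::'a::chilbert) - z) = cinner x y - cinner x z"
  using cinner_add_right[of x y "-z"] by (simp add: cinner_minus_right)

lemma cinner_diff_left: "cinner ((x::'a::chilbert) - y) z = cinner x z - cinner y z"
  using cinner_add_left[of x "-y" z] by (simp add: cinner_minus_left)

lemmas cinner_simps = cinner_add_left cinner_add_right cinner_diff_left cinner_diff_right
  cinner_scaleC_left cinner_scaleC_right cinner_minus_left cinner_minus_right

lemma cinner_self_Im [simp]: "Im (cinner (x::'a::chilbert) x) = 0"
  using cinner_commute[of x x] by (metis complex_cnj_cancel_iff complex_eq_cancel_iff2 Reals_cnj_iff complex_is_Real_iff)

lemma cinner_self_real: "cinner (x::'a::chilbert) x = complex_of_real (Re (cinner x x))"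
  by (simp add: complex_eq_iff)

lemma cinner_self_ge0 [simp]: "0 \<le> Re (cinner (x::'a::chilbert) x)"
  by (cases "x = 0") (auto dest: cinner_pos intro: less_imp_le)

lemma cinner_self_eq0 [simp]: "cinner (x::'a::chilbert) x = 0 \<longleftrightarrow> x = 0"
  using cinner_pos[of x] by (cases "x = 0") auto

lemma Re_cinner_self_eq0 [simp]: "Re (cinner (x::'a::chilbert) x) = 0 \<longleftrightarrow> x = 0"
  using cinner_pos[of x] by (cases "x = 0") auto

lemma Re_cinner_commute: "Re (cinner y (x::'a::chilbert)) = Re (cinner x y)"
  by (subst cinner_commute) simp

lemma cinner_eq_zero_commute: "cinner u x = 0 \<Longrightarrow> cinner x (u::'a::chilbert) = 0"
  by (subst cinner_commute) simp

lemma cinner_ext: "(\<And>z. cinner z (x::'a::chilbert) = cinner z y) \<Longrightarrow> x = y"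
proof -
  assume "\<And>z. cinner z x = cinner z y"
  hence "cinner (x - y) (x - y) = 0" by (simp add: cinner_diff_right)
  thus ?thesis by simp
qed

lemma cnorm_ge0 [simp]: "0 \<le> cnorm x"
  by (simp add: cnorm_def)

lemma cnorm_sq: "(cnorm x)\<^sup>2 = Re (cinner x x)"
  by (simp add: cnorm_def)

lemma cnorm_eq0 [simp]: "cnorm x = 0 \<longleftrightarrow> x = 0"
  by (simp add: cnorm_def)

lemma cnorm_zero [simp]: "cnorm 0 = 0"
  by simp

lemma cnorm_scaleC: "cnorm (c *\<^sub>C x) = cmod c * cnorm x"
proof -
  have "c * cnj c = complex_of_real ((cmod c)\<^sup>2)"
    by (rule complex_norm_square[symmetric])
  hence "cinner (c *\<^sub>C x) (c *\<^sub>C x) = complex_of_real ((cmod c)\<^sup>2) * cinner x x"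
    by (simp add: cinner_scaleC_left cinner_scaleC_right mult.assoc[symmetric] del: of_real_power)
  hence "(cnorm (c *\<^sub>C x))\<^sup>2 = (cmod c * cnorm x)\<^sup>2"
    by (simp add: cnorm_sq power_mult_distrib)
  thus ?thesis by (simp add: power2_eq_iff_nonneg)
qed

lemma cnorm_minus: "cnorm (- x) = cnorm x"
  by (simp add: cnorm_def cinner_minus_left cinner_minus_right)

lemma cnorm_commute: "cnorm (x - y) = cnorm (y - x)"
  by (metis cnorm_minus minus_diff_eq)

lemma cinner_diff_scaleC_self:
  "cinner ((x::'a::chilbert) - t *\<^sub>C y) (x - t *\<^sub>C y)
   = cinner x x - t * cinner x y - cnj t * cinner y x + cnj t * t * cinner y y"
  by (simp add: cinner_simps algebra_simps)

lemma cinner_remove_component: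
  fixes u y :: "'a::chilbert"
  assumes "u \<noteq> 0"
  defines "t \<equiv> cinner u y / complex_of_real (Re (cinner u u))"
  shows "cinner (y - t *\<^sub>C u) (y - t *\<^sub>C u)
     = cinner y y - complex_of_real ((cmod (cinner u y))\<^sup>2 / Re (cinner u u))"
proof -
  define r where "r = Re (cinner u u)"
  have r: "r > 0" using cinner_pos[OF assms(1)] by (simp add: r_def)
  have ru: "cinner u u = complex_of_real r" by (simp add: r_def cinner_self_real[of u, symmetric])
  have cm: "cmod (cinner u y) * cmod (cinner u y)
      = Re (cinner u y) * Re (cinner u y) + Im (cinner u y) * Im (cinner u y)"
    using cmod_power2[of "cinner u y"] by (simp add: power2_eq_square)
  show ?thesis
    unfolding cinner_diff_scaleC_self cinner_commute[of y u] ru t_def r_def[symmetric] using r cm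
    by (simp add: field_simps complex_norm_square complex_eq_iff power2_eq_square)
qed

lemma cinner_Cauchy_Schwarz: "cmod (cinner x y) \<le> cnorm x * cnorm (y::'a::chilbert)"
proof (cases "x = 0")
  case False
  have "0 \<le> Re (cinner y y) - (cmod (cinner x y))\<^sup>2 / Re (cinner x x)"
    using cinner_self_ge0 cinner_remove_component[OF False, of y] by (metis Re_complex_of_real minus_complex.sel(1))
  hence "(cmod (cinner x y))\<^sup>2 \<le> Re (cinner x x) * Re (cinner y y)"
    using cinner_pos[OF False] by (simp add: field_simps)
  hence "(cmod (cinner x y))\<^sup>2 \<le> (cnorm x * cnorm y)\<^sup>2"
    by (simp add: power_mult_distrib cnorm_sq)
  thus ?thesis by (rule power2_le_imp_le) simp
qed simp

lemma cnorm_triangle: "cnorm ((x::'a::chilbert) + y) \<le> cnorm x + cnorm y"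
proof -
  have "Re (cinner (x + y) (x + y)) = Re (cinner x x) + Re (cinner y y) + 2 * Re (cinner x y)"
    by (simp add: cinner_simps Re_cinner_commute[of y x])
  also have "\<dots> \<le> (cnorm x)\<^sup>2 + (cnorm y)\<^sup>2 + 2 * (cnorm x * cnorm y)"
    using cinner_Cauchy_Schwarz[of x y] complex_Re_le_cmod[of "cinner x y"] by (simp add: cnorm_sq)
  also have "\<dots> = (cnorm x + cnorm y)\<^sup>2"
    by (simp add: power2_eq_square algebra_simps)
  finally have "(cnorm (x + y))\<^sup>2 \<le> (cnorm x + cnorm y)\<^sup>2" by (simp add: cnorm_sq)
  thus ?thesis by (rule power2_le_imp_le) simp
qed

lemma cnorm_triangle_diff: "cnorm ((x::'a::chilbert) - z) \<le> cnorm (x - y) + cnorm (y - z)"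
  using cnorm_triangle[of "x - y" "y - z"] by simp

lemma cnorm_parallelogram:
  "(cnorm ((a::'a::chilbert) - b))\<^sup>2 = 2 * (cnorm a)\<^sup>2 + 2 * (cnorm b)\<^sup>2 - (cnorm (a + b))\<^sup>2"
  by (simp add: cnorm_sq cinner_simps)

section \<open>Closed subspaces and orthogonal projection\<close>

lemma chilbert_Cauchy_convergent:
  assumes "\<And>e. e > 0 \<Longrightarrow> \<exists>N. \<forall>m\<ge>N. \<forall>n\<ge>N. cnorm ((X::nat \<Rightarrow> 'a::chilbert) m - X n) < e"
  shows "\<exists>L. (\<lambda>n. cnorm (X n - L)) \<longlonglongrightarrow> 0"
proof -
  obtain L where "\<forall>e>0. \<exists>N::nat. \<forall>n\<ge>N. cnorm (X n - L) < e"
    using complete[of X] assms unfolding cnorm_def by blast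
  hence "(\<lambda>n. cnorm (X n - L)) \<longlonglongrightarrow> 0" unfolding LIMSEQ_iff by simp
  thus ?thesis by blast
qed

lemma closed_subspaceD:
  assumes "closed_subspace H"
  shows "0 \<in> H" "x \<in> H \<Longrightarrow> y \<in> H \<Longrightarrow> x + y \<in> H" "x \<in> H \<Longrightarrow> c *\<^sub>C x \<in> H"
    "(\<And>n. X n \<in> H) \<Longrightarrow> (\<lambda>n. cnorm (X n - L)) \<longlonglongrightarrow> 0 \<Longrightarrow> L \<in> H"
  using assms unfolding closed_subspace_def by blast+

lemma closed_subspace_diff:
  assumes "closed_subspace H" "x \<in> H" "y \<in> H"
  shows "x - y \<in> H"
proof -
  have "- y \<in> H"
    using closed_subspaceD(3)[OF assms(1,3), of "- 1"] by (simp add: scaleC_minus_left scaleC_one)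
  from closed_subspaceD(2)[OF assms(1,2) this] show ?thesis by simp
qed

lemma closed_subspace_Inter: "(\<And>S. S \<in> F \<Longrightarrow> closed_subspace S) \<Longrightarrow> closed_subspace (\<Inter>F)"
  unfolding closed_subspace_def by blast

lemma closed_subspace_dist_parallelogram:
  assumes N: "closed_subspace N" and "v \<in> N" "w \<in> N"
    and d: "\<And>u. u \<in> N \<Longrightarrow> d \<le> (cnorm (x - u))\<^sup>2"
  shows "(cnorm (v - w))\<^sup>2 \<le> 2 * (cnorm (x - v))\<^sup>2 + 2 * (cnorm (x - w))\<^sup>2 - 4 * d"
proof -
  define mid where "mid = (1/2::complex) *\<^sub>C (v + w)"
  have "mid \<in> N" unfolding mid_def using assms closed_subspaceD[OF N] by blast
  have "(x - w) + (x - v) = (2::complex) *\<^sub>C (x - mid)"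
    unfolding mid_def scaleC_diff_right scaleC_scaleC by (simp add: scaleC_one two_scaleC algebra_simps)
  hence "(cnorm ((x - w) + (x - v)))\<^sup>2 = 4 * (cnorm (x - mid))\<^sup>2"
    by (simp add: cnorm_scaleC power_mult_distrib)
  moreover have "v - w = (x - w) - (x - v)" by simp
  ultimately show ?thesis
    using cnorm_parallelogram[of "x - w" "x - v"] d[OF \<open>mid \<in> N\<close>] by simp
qed

lemma minimizing_sequence_converges:
  assumes N: "closed_subspace N" and W: "\<And>n. W n \<in> N"
    and d: "\<And>u. u \<in> N \<Longrightarrow> d \<le> (cnorm (x - u))\<^sup>2"
    and near: "\<And>n. (cnorm (x - W n))\<^sup>2 < d + inverse (real (Suc n))"
  shows "\<exists>L\<in>N. (\<lambda>n. cnorm (W n - L)) \<longlonglongrightarrow> 0"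
proof -
  define e :: "nat \<Rightarrow> real" where "e n = inverse (real (Suc n))" for n
  have W_Cauchy: "(cnorm (W m - W n))\<^sup>2 \<le> 2 * e m + 2 * e n" for m n
    using closed_subspace_dist_parallelogram[OF N W W d, of m n] near[of m] near[of n]
    unfolding e_def by linarith
  have "\<exists>M. \<forall>m\<ge>M. \<forall>n\<ge>M. cnorm (W m - W n) < r" if "r > 0" for r
  proof -
    obtain M where M: "e M < r\<^sup>2 / 4" using reals_Archimedean[of "r\<^sup>2 / 4"] \<open>r > 0\<close> by (auto simp: e_def)
    have e_mono: "e m \<le> e M" if "m \<ge> M" for m using that by (simp add: e_def le_imp_inverse_le)
    have "(cnorm (W m - W n))\<^sup>2 < r\<^sup>2" if "m \<ge> M" "n \<ge> M" for m n
      using W_Cauchy[of m n] M e_mono[OF that(1)] e_mono[OF that(2)] by linarith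
    thus ?thesis using \<open>r > 0\<close> by (meson less_imp_le power2_less_imp_less)
  qed
  then obtain L where L: "(\<lambda>n. cnorm (W n - L)) \<longlonglongrightarrow> 0"
    using chilbert_Cauchy_convergent by blast
  thus ?thesis using closed_subspaceD(4)[OF N W L] by blast
qed

lemma closed_subspace_nearest_point:
  assumes N: "closed_subspace N"
  shows "\<exists>w\<in>N. \<forall>u\<in>N. cnorm (x - w) \<le> cnorm (x - u)"
proof -
  define d where "d = (INF u\<in>N. (cnorm (x - u))\<^sup>2)"
  have "N \<noteq> {}" using closed_subspaceD(1)[OF N] by blast
  have bdd: "bdd_below ((\<lambda>u. (cnorm (x - u))\<^sup>2) ` N)" by (rule bdd_belowI2[of _ 0]) simp
  have "0 \<le> d" unfolding d_def using \<open>N \<noteq> {}\<close> by (intro cINF_greatest) auto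
  have d_le: "d \<le> (cnorm (x - u))\<^sup>2" if "u \<in> N" for u
    unfolding d_def using bdd that by (rule cINF_lower)
  have "\<exists>w\<in>N. (cnorm (x - w))\<^sup>2 < d + inverse (real (Suc n))" for n
  proof -
    have "d < d + inverse (real (Suc n))" by simp
    thus ?thesis using cINF_less_iff[OF \<open>N \<noteq> {}\<close> bdd] unfolding d_def by blast
  qed
  then obtain W where W: "\<And>n. W n \<in> N" "\<And>n. (cnorm (x - W n))\<^sup>2 < d + inverse (real (Suc n))"
    by metis
  then obtain L where "L \<in> N" and L: "(\<lambda>n. cnorm (W n - L)) \<longlonglongrightarrow> 0"
    using minimizing_sequence_converges[OF N _ d_le] by blast
  have "(\<lambda>n. sqrt (d + inverse (real (Suc n))) + cnorm (W n - L)) \<longlonglongrightarrow> sqrt d + 0"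
    using LIMSEQ_inverse_real_of_nat_add[of d] L by (intro tendsto_intros)
  moreover have "cnorm (x - L) \<le> sqrt (d + inverse (real (Suc n))) + cnorm (W n - L)" for n
    using cnorm_triangle_diff[of x L "W n"] real_le_rsqrt[OF less_imp_le[OF W(2)[of n]]] by linarith
  ultimately have "cnorm (x - L) \<le> sqrt d" by (intro LIMSEQ_le_const) auto
  hence "(cnorm (x - L))\<^sup>2 \<le> d"
    using \<open>0 \<le> d\<close> by (metis cnorm_ge0 power_mono real_sqrt_pow2)
  thus ?thesis using \<open>L \<in> N\<close> d_le by (meson order_trans power2_le_imp_le cnorm_ge0)
qed

lemma nearest_point_orthogonal:
  assumes N: "closed_subspace N" and "w \<in> N" "u \<in> N"
    and nearest: "\<And>v. v \<in> N \<Longrightarrow> cnorm (x - w) \<le> cnorm (x - v)"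
  shows "cinner u (x - w) = 0"
proof (rule ccontr)
  assume nz: "cinner u (x - w) \<noteq> 0"
  hence "u \<noteq> 0" by auto
  define t where "t = cinner u (x - w) / complex_of_real (Re (cinner u u))"
  have "w + t *\<^sub>C u \<in> N" using closed_subspaceD(2,3)[OF N] assms(2,3) by blast
  moreover have "x - (w + t *\<^sub>C u) = (x - w) - t *\<^sub>C u" by simp
  ultimately have "cnorm (x - w) \<le> cnorm ((x - w) - t *\<^sub>C u)" using nearest by metis
  hence "(cnorm (x - w))\<^sup>2 \<le> (cnorm ((x - w) - t *\<^sub>C u))\<^sup>2" by (rule power_mono) simp
  hence "(cmod (cinner u (x - w)))\<^sup>2 / Re (cinner u u) \<le> 0"
    unfolding cnorm_sq t_def cinner_remove_component[OF \<open>u \<noteq> 0\<close>] by simp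
  thus False using cinner_pos[OF \<open>u \<noteq> 0\<close>] nz by (simp add: field_simps)
qed

definition proj :: "'a::chilbert set \<Rightarrow> 'a \<Rightarrow> 'a" where
  "proj N x = (SOME w. w \<in> N \<and> (\<forall>u\<in>N. cinner u (x - w) = 0))"

lemma proj:
  assumes "closed_subspace N"
  shows proj_in: "proj N x \<in> N"
    and proj_orthogonal: "u \<in> N \<Longrightarrow> cinner u (x - proj N x) = 0"
proof -
  obtain w where "w \<in> N" "\<And>u. u \<in> N \<Longrightarrow> cnorm (x - w) \<le> cnorm (x - u)"
    using closed_subspace_nearest_point[OF assms] by blast
  hence "\<exists>w. w \<in> N \<and> (\<forall>u\<in>N. cinner u (x - w) = 0)"
    using nearest_point_orthogonal[OF assms] by blast
  hence "proj N x \<in> N \<and> (\<forall>u\<in>N. cinner u (x - proj N x) = 0)"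
    unfolding proj_def by (rule someI_ex)
  thus "proj N x \<in> N" "u \<in> N \<Longrightarrow> cinner u (x - proj N x) = 0" by auto
qed

lemma proj_unique:
  assumes N: "closed_subspace N" and "w \<in> N" and orth: "\<And>u. u \<in> N \<Longrightarrow> cinner u (x - w) = 0"
  shows "proj N x = w"
proof -
  define d where "d = w - proj N x"
  have "d \<in> N" unfolding d_def using closed_subspace_diff[OF N \<open>w \<in> N\<close> proj_in[OF N]] .
  have "cinner d d = cinner d ((x - proj N x) - (x - w))" by (simp add: d_def)
  also have "\<dots> = 0"
    using proj_orthogonal[OF N \<open>d \<in> N\<close>] orth[OF \<open>d \<in> N\<close>] by (simp only: cinner_diff_right) simp
  finally show ?thesis by (simp add: d_def)
qed

lemma proj_id: "closed_subspace N \<Longrightarrow> w \<in> N \<Longrightarrow> proj N w = w"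
  by (rule proj_unique) auto

section \<open>Bounded operators and adjoints\<close>

lemma BKI:
  "(\<And>x y. f (x + y) = f x + f y) \<Longrightarrow> (\<And>c x. f (c *\<^sub>C x) = c *\<^sub>C f x) \<Longrightarrow>
   (\<And>x. cnorm (f x) \<le> M * cnorm x) \<Longrightarrow> f \<in> BK"
  unfolding BK_def clinear_def by blast

lemma BK_add: "f \<in> BK \<Longrightarrow> f (x + y) = f x + f y"
  by (simp add: BK_def clinear_def)

lemma BK_scaleC: "f \<in> BK \<Longrightarrow> f (c *\<^sub>C x) = c *\<^sub>C f x"
  by (simp add: BK_def clinear_def)

lemma BK_zero: "f \<in> BK \<Longrightarrow> f 0 = 0"
  using BK_scaleC[of f 0 0] by simp

lemma BK_diff: "f \<in> BK \<Longrightarrow> f (x - y) = f x - f y"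
  using BK_add[of f "x - y" y] by simp

lemma BK_bound:
  assumes "f \<in> BK"
  shows "\<exists>M\<ge>0. \<forall>x. cnorm (f x) \<le> M * cnorm x"
proof -
  obtain M where M: "\<And>x. cnorm (f x) \<le> M * cnorm x" using assms by (auto simp: BK_def)
  have "cnorm (f x) \<le> max M 0 * cnorm x" for x
    using M[of x] mult_right_mono[of M "max M 0" "cnorm x"] by simp
  thus ?thesis by (intro exI[of _ "max M 0"]) auto
qed

lemma BK_comp: "f \<in> BK \<Longrightarrow> g \<in> BK \<Longrightarrow> f \<circ> g \<in> BK"
proof -
  assume f: "f \<in> BK" and g: "g \<in> BK"
  obtain M where M: "M \<ge> 0" "\<forall>x. cnorm (f x) \<le> M * cnorm x" using BK_bound[OF f] by blast
  obtain M' where M': "\<forall>x. cnorm (g x) \<le> M' * cnorm x" using BK_bound[OF g] by blast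
  show ?thesis
  proof (rule BKI[where M = "M * M'"])
    fix x
    have "cnorm (f (g x)) \<le> M * cnorm (g x)" using M by blast
    also have "\<dots> \<le> M * (M' * cnorm x)" using M M' by (intro mult_left_mono) auto
    finally show "cnorm ((f \<circ> g) x) \<le> M * M' * cnorm x" by (simp add: mult.assoc)
  qed (simp_all add: BK_add[OF f] BK_add[OF g] BK_scaleC[OF f] BK_scaleC[OF g])
qed

lemma BK_diff_fun: "f \<in> BK \<Longrightarrow> g \<in> BK \<Longrightarrow> (\<lambda>x. f x - g x) \<in> BK"
proof -
  assume f: "f \<in> BK" and g: "g \<in> BK"
  obtain M where M: "\<forall>x. cnorm (f x) \<le> M * cnorm x" using BK_bound[OF f] by blast
  obtain M' where M': "\<forall>x. cnorm (g x) \<le> M' * cnorm x" using BK_bound[OF g] by blast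
  show ?thesis
  proof (rule BKI[where M = "M + M'"])
    fix x
    have "cnorm (f x - g x) \<le> cnorm (f x) + cnorm (g x)"
      using cnorm_triangle[of "f x" "- g x"] by (simp add: cnorm_minus)
    also have "\<dots> \<le> M * cnorm x + M' * cnorm x" using M M' by (intro add_mono) auto
    finally show "cnorm (f x - g x) \<le> (M + M') * cnorm x" by (simp add: distrib_right)
  qed (simp_all add: BK_add[OF f] BK_add[OF g] BK_scaleC[OF f] BK_scaleC[OF g] scaleC_diff_right)
qed

lemma BK_id: "id \<in> BK"
  by (rule BKI[where M = 1]) auto

lemma BK_scaleC_id: "(\<lambda>x. c *\<^sub>C (x::'a::chilbert)) \<in> BK"
  by (rule BKI[where M = "cmod c"]) (simp_all add: scaleC_add_right scaleC_scaleC mult.commute cnorm_scaleC)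

lemma closed_subspace_kernel:
  assumes f: "f \<in> BK"
  shows "closed_subspace {x. f x = 0}"
  unfolding closed_subspace_def
proof (intro conjI allI impI ballI)
  fix X L assume X: "(\<forall>n. X n \<in> {x. f x = 0}) \<and> (\<lambda>n. cnorm (X n - L)) \<longlonglongrightarrow> 0"
  obtain M where M: "\<forall>x. cnorm (f x) \<le> M * cnorm x" using BK_bound[OF f] by blast
  have "cnorm (f L) \<le> M * cnorm (X n - L)" for n
    using M[rule_format, of "X n - L"] X by (simp add: BK_diff[OF f] cnorm_minus)
  moreover have "(\<lambda>n. M * cnorm (X n - L)) \<longlonglongrightarrow> 0" using X tendsto_mult_right_zero by blast
  ultimately have "cnorm (f L) \<le> 0" by (intro LIMSEQ_le_const) auto
  thus "L \<in> {x. f x = 0}" by (metis cnorm_eq0 cnorm_ge0 mem_Collect_eq order_antisym)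
qed (simp_all add: BK_zero[OF f] BK_add[OF f] BK_scaleC[OF f])

lemma Riesz_representation:
  fixes \<phi> :: "'a::chilbert \<Rightarrow> complex"
  assumes add: "\<And>x y. \<phi> (x + y) = \<phi> x + \<phi> y" and scale: "\<And>c x. \<phi> (c *\<^sub>C x) = c * \<phi> x"
    and bound: "\<And>x. cmod (\<phi> x) \<le> M * cnorm x"
  shows "\<exists>r. \<forall>x. \<phi> x = cinner r x"
proof (cases "\<forall>x. \<phi> x = 0")
  case True thus ?thesis by (intro exI[of _ 0]) simp
next
  case False
  then obtain x0 where x0: "\<phi> x0 \<noteq> 0" by blast
  have diff: "\<phi> (x - y) = \<phi> x - \<phi> y" for x y
    using add[of "x - y" y] by simp
  define N where "N = {x. \<phi> x = 0}"
  have N: "closed_subspace N" unfolding closed_subspace_def N_def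
  proof (intro conjI allI impI ballI)
    fix X L assume X: "(\<forall>n. X n \<in> {x. \<phi> x = 0}) \<and> (\<lambda>n. cnorm (X n - L)) \<longlonglongrightarrow> 0"
    have "cmod (\<phi> L) \<le> M * cnorm (X n - L)" for n
      using bound[of "L - X n"] X diff[of L "X n"] by (simp add: cnorm_commute)
    moreover have "(\<lambda>n. M * cnorm (X n - L)) \<longlonglongrightarrow> 0" using X tendsto_mult_right_zero by blast
    ultimately have "cmod (\<phi> L) \<le> 0" by (intro LIMSEQ_le_const) auto
    thus "L \<in> {x. \<phi> x = 0}" by simp
  qed (use add scale scale[of 0 0] in auto)
  define z where "z = x0 - proj N x0"
  have \<phi>z: "\<phi> z = \<phi> x0" using proj_in[OF N, of x0] by (simp add: z_def diff N_def)
  hence "z \<noteq> 0" using x0 scale[of 0 0] by auto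
  have z_eq: "cinner z x = \<phi> x / \<phi> z * cinner z z" for x
  proof -
    have "x - (\<phi> x / \<phi> z) *\<^sub>C z \<in> N" using \<phi>z x0 by (simp add: N_def diff scale)
    hence "cinner z (x - (\<phi> x / \<phi> z) *\<^sub>C z) = 0"
      unfolding z_def by (rule cinner_eq_zero_commute[OF proj_orthogonal[OF N]])
    thus ?thesis by (simp add: cinner_diff_right cinner_scaleC_right)
  qed
  have "cinner ((cnj (\<phi> z / cinner z z)) *\<^sub>C z) x = \<phi> x" for x
  proof -
    have "cinner ((cnj (\<phi> z / cinner z z)) *\<^sub>C z) x = \<phi> z / cinner z z * cinner z x"
      by (simp add: cinner_scaleC_left)
    also have "\<dots> = \<phi> x" using \<open>z \<noteq> 0\<close> \<phi>z x0 by (simp add: z_eq[of x])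
    finally show ?thesis .
  qed
  thus ?thesis by metis
qed

lemma adj_unique: "(\<And>x y. cinner (f x) y = cinner x (g y)) \<Longrightarrow> adj f = (g :: 'a::chilbert \<Rightarrow> 'a)"
  unfolding adj_def
proof (rule the_equality)
  fix g' assume g: "\<And>x y. cinner (f x) y = cinner x (g y)" and g': "\<forall>x y. cinner (f x) y = cinner x (g' y)"
  show "g' = g"
  proof
    fix y show "g' y = g y" by (rule cinner_ext) (simp add: g'[rule_format, symmetric] g)
  qed
qed blast

lemma adj_cinner:
  assumes f: "f \<in> BK"
  shows "cinner (f x) y = cinner x (adj f y)"
proof -
  obtain M where M: "M \<ge> 0" "\<forall>x. cnorm (f x) \<le> M * cnorm x" using BK_bound[OF f] by blast
  have "\<exists>r. \<forall>x. cinner y (f x) = cinner r x" for y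
  proof (rule Riesz_representation[where M = "cnorm y * M"])
    fix x
    have "cmod (cinner y (f x)) \<le> cnorm y * cnorm (f x)" by (rule cinner_Cauchy_Schwarz)
    also have "\<dots> \<le> cnorm y * (M * cnorm x)" using M by (intro mult_left_mono) auto
    finally show "cmod (cinner y (f x)) \<le> cnorm y * M * cnorm x" by (simp add: mult.assoc)
  qed (simp_all add: BK_add[OF f] BK_scaleC[OF f] cinner_simps)
  then obtain g where "\<And>y x. cinner y (f x) = cinner (g y) x" by metis
  hence g: "cinner (f x) y = cinner x (g y)" for x y by (metis cinner_commute)
  thus ?thesis using adj_unique[OF g] by simp
qed

lemma adj_cinner_left:
  assumes "f \<in> BK"
  shows "cinner x (f y) = cinner (adj f x) y"
  by (simp add: cinner_commute[of x] cinner_commute[of "adj f x"] adj_cinner[OF assms])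

lemma adj_BK:
  assumes f: "f \<in> BK"
  shows "adj f \<in> BK"
proof -
  obtain M where M: "M \<ge> 0" "\<forall>x. cnorm (f x) \<le> M * cnorm x" using BK_bound[OF f] by blast
  show ?thesis
  proof (rule BKI[where M = M])
    fix x y show "adj f (x + y) = adj f x + adj f y"
      by (rule cinner_ext) (simp add: adj_cinner[OF f, symmetric] cinner_simps)
  next
    fix c x show "adj f (c *\<^sub>C x) = c *\<^sub>C adj f x"
      by (rule cinner_ext) (simp add: adj_cinner[OF f, symmetric] cinner_simps)
  next
    fix y
    have "(cnorm (adj f y))\<^sup>2 = Re (cinner (f (adj f y)) y)" by (simp add: cnorm_sq adj_cinner[OF f])
    also have "\<dots> \<le> cnorm (f (adj f y)) * cnorm y"
      by (rule order_trans[OF complex_Re_le_cmod cinner_Cauchy_Schwarz])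
    also have "\<dots> \<le> M * cnorm (adj f y) * cnorm y" using M by (intro mult_right_mono) auto
    finally have "cnorm (adj f y) * cnorm (adj f y) \<le> cnorm (adj f y) * (M * cnorm y)"
      by (simp add: power2_eq_square algebra_simps)
    thus "cnorm (adj f y) \<le> M * cnorm y"
    proof (cases "adj f y = 0")
      case False
      hence "0 < cnorm (adj f y)" by (metis cnorm_eq0 cnorm_ge0 less_eq_real_def)
      thus ?thesis using \<open>cnorm (adj f y) * cnorm (adj f y) \<le> _\<close> by (simp add: mult_le_cancel_left_pos)
    qed (use M in simp)
  qed
qed

lemma quadratic_form_zero_imp_zero:
  assumes f: "f \<in> BK" and zero: "\<And>x. cinner x (f x) = 0"
  shows "f x = 0"
proof -
  have sum: "cinner x (f y) + cinner y (f x) = 0" for x y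
    using zero[of "x + y"] zero[of x] zero[of y] by (simp add: BK_add[OF f] cinner_simps add.commute)
  have "cinner x (f y) = cinner y (f x)" for x y
    using sum[of x "\<i> *\<^sub>C y"] by (simp add: BK_scaleC[OF f] cinner_simps)
  hence "cinner (f x) (f x) = 0" using sum[of "f x" x] by simp
  thus ?thesis by simp
qed

lemma proj_BK:
  assumes N: "closed_subspace N"
  shows "proj N \<in> BK"
proof (rule BKI[where M = 1])
  fix x y
  show "proj N (x + y) = proj N x + proj N y"
  proof (rule proj_unique[OF N])
    show "proj N x + proj N y \<in> N" using closed_subspaceD(2)[OF N proj_in[OF N] proj_in[OF N]] .
    fix u assume "u \<in> N"
    have "x + y - (proj N x + proj N y) = (x - proj N x) + (y - proj N y)" by simp
    thus "cinner u (x + y - (proj N x + proj N y)) = 0"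
      using proj_orthogonal[OF N \<open>u \<in> N\<close>] by (simp only: cinner_add_right) simp
  qed
next
  fix c x
  show "proj N (c *\<^sub>C x) = c *\<^sub>C proj N x"
    using closed_subspaceD(3)[OF N proj_in[OF N]] proj_orthogonal[OF N]
    by (intro proj_unique[OF N]) (simp_all add: scaleC_diff_right[symmetric] cinner_scaleC_right)
next
  fix x
  define w where "w = proj N x"
  have orth: "cinner w (x - w) = 0" using proj[OF N] by (simp add: w_def)
  have "Re (cinner x x) = Re (cinner (w + (x - w)) (w + (x - w)))" by simp
  also have "\<dots> = Re (cinner w w) + Re (cinner (x - w) (x - w))"
    unfolding cinner_add_left cinner_add_right using orth cinner_eq_zero_commute[OF orth] by simp
  finally have "(cnorm w)\<^sup>2 \<le> (cnorm x)\<^sup>2" by (simp add: cnorm_sq)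
  hence "cnorm w \<le> cnorm x" by (rule power2_le_imp_le) simp
  thus "cnorm (proj N x) \<le> 1 * cnorm x" by (simp add: w_def)
qed

lemma proj_is_projection:
  assumes N: "closed_subspace N"
  shows "is_projection (proj N)"
proof -
  have "proj N \<circ> proj N = proj N" using proj_id[OF N proj_in[OF N]] by (simp add: fun_eq_iff)
  moreover have "adj (proj N) = proj N"
  proof (rule adj_unique)
    fix x y
    have "cinner (proj N x) y = cinner (proj N x) (proj N y)"
      using proj_orthogonal[OF N proj_in[OF N], of x y] by (simp add: cinner_diff_right)
    also have "\<dots> = cinner x (proj N y)"
      using cinner_eq_zero_commute[OF proj_orthogonal[OF N proj_in[OF N], of y x]]
      by (simp add: cinner_diff_left)
    finally show "cinner (proj N x) y = cinner x (proj N y)" .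
  qed
  ultimately show ?thesis unfolding is_projection_def using proj_BK[OF N] by simp
qed

lemma proj_commute:
  assumes N: "closed_subspace N" and f: "f \<in> BK"
    and inv: "\<And>w. w \<in> N \<Longrightarrow> f w \<in> N" and inv_adj: "\<And>w. w \<in> N \<Longrightarrow> adj f w \<in> N"
  shows "proj N (f x) = f (proj N x)"
proof (rule proj_unique[OF N])
  show "f (proj N x) \<in> N" using inv proj_in[OF N] by blast
  fix u assume "u \<in> N"
  have "cinner u (f x - f (proj N x)) = cnj (cinner (f (x - proj N x)) u)"
    by (simp add: BK_diff[OF f] cinner_commute[of u])
  also have "\<dots> = 0"
    using cinner_eq_zero_commute[OF proj_orthogonal[OF N inv_adj[OF \<open>u \<in> N\<close>]]] by (simp add: adj_cinner[OF f])
  finally show "cinner u (f x - f (proj N x)) = 0" .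
qed

section \<open>Commutants and the central carrier\<close>

definition closed_span :: "'a::chilbert set \<Rightarrow> 'a set" where
  "closed_span S = \<Inter> {N. closed_subspace N \<and> S \<subseteq> N}"

lemma closed_subspace_closed_span: "closed_subspace (closed_span S)"
  unfolding closed_span_def by (rule closed_subspace_Inter) auto

lemma closed_span_superset: "S \<subseteq> closed_span S"
  unfolding closed_span_def by auto

lemma closed_span_least: "closed_subspace N \<Longrightarrow> S \<subseteq> N \<Longrightarrow> closed_span S \<subseteq> N"
  unfolding closed_span_def by auto

lemma closed_span_kernel:
  assumes "f \<in> BK" and "\<And>v. v \<in> S \<Longrightarrow> f v = 0" and "w \<in> closed_span S"
  shows "f w = 0"
  using closed_span_least[OF closed_subspace_kernel[OF assms(1)]] assms(2,3) by blast

lemma closed_span_invariant: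
  assumes f: "f \<in> BK" and inv: "\<And>v. v \<in> S \<Longrightarrow> f v \<in> S" and "w \<in> closed_span S"
  shows "f w \<in> closed_span S"
proof -
  define N where "N = closed_span S"
  have "w \<in> closed_span S" by fact
  moreover have "(\<lambda>x. proj N (f x) - f x) \<in> BK"
    using BK_diff_fun[OF BK_comp[OF proj_BK[OF closed_subspace_closed_span] f] f] by (simp add: N_def comp_def)
  moreover have "proj N (f v) - f v = 0" if "v \<in> S" for v
    using proj_id[OF closed_subspace_closed_span] closed_span_superset inv[OF that] by (auto simp: N_def)
  ultimately have "proj N (f w) = f w" using closed_span_kernel[of "\<lambda>x. proj N (f x) - f x" S w] by simp
  thus ?thesis using proj_in[OF closed_subspace_closed_span] by (metis N_def)
qed

lemma commutant_subset_BK: "commutant S \<subseteq> BK"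
  unfolding commutant_def by blast

lemma commutant_apply:
  assumes "c \<in> commutant S" "a \<in> S"
  shows "a (c x) = c (a x)"
proof -
  have "a \<circ> c = c \<circ> a" using assms unfolding commutant_def by blast
  hence "(a \<circ> c) x = (c \<circ> a) x" by simp
  thus ?thesis by simp
qed

lemma proj_closed_span_in_commutant:
  assumes M: "M \<subseteq> BK" "\<And>a. a \<in> M \<Longrightarrow> adj a \<in> M"
    and inv: "\<And>a v. a \<in> M \<Longrightarrow> v \<in> S \<Longrightarrow> a v \<in> S"
  shows "proj (closed_span S) \<in> commutant M"
proof -
  have "a \<circ> proj (closed_span S) = proj (closed_span S) \<circ> a" if "a \<in> M" for a
  proof -
    have "a \<in> BK" "adj a \<in> BK" using M \<open>a \<in> M\<close> by auto
    have "w \<in> closed_span S \<Longrightarrow> a w \<in> closed_span S" for w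
      by (rule closed_span_invariant[OF \<open>a \<in> BK\<close>]) (use inv \<open>a \<in> M\<close> in blast)
    moreover have "w \<in> closed_span S \<Longrightarrow> adj a w \<in> closed_span S" for w
      by (rule closed_span_invariant[OF \<open>adj a \<in> BK\<close>]) (use inv M(2) \<open>a \<in> M\<close> in blast)
    ultimately have "proj (closed_span S) (a x) = a (proj (closed_span S) x)" for x
      by (rule proj_commute[OF closed_subspace_closed_span \<open>a \<in> BK\<close>])
    thus ?thesis by (simp add: fun_eq_iff)
  qed
  thus ?thesis unfolding commutant_def using proj_BK[OF closed_subspace_closed_span] by blast
qed

lemma commutant_adj:
  assumes M: "M \<subseteq> BK" "\<And>a. a \<in> M \<Longrightarrow> adj a \<in> M" and c: "c \<in> commutant M"
  shows "adj c \<in> commutant M"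
proof -
  have c_BK: "c \<in> BK" using c commutant_subset_BK by blast
  have "a (adj c y) = adj c (a y)" if "a \<in> M" for a y
  proof (rule cinner_ext)
    fix x
    have a_BK: "a \<in> BK" using M \<open>a \<in> M\<close> by blast
    have "cinner x (a (adj c y)) = cinner (c (adj a x)) y"
      by (simp add: adj_cinner_left[OF a_BK] adj_cinner[OF c_BK])
    also have "\<dots> = cinner (adj a (c x)) y" using commutant_apply[OF c M(2)[OF \<open>a \<in> M\<close>]] by simp
    also have "\<dots> = cinner x (adj c (a y))"
      by (simp add: adj_cinner_left[OF a_BK, symmetric] adj_cinner[OF c_BK])
    finally show "cinner x (a (adj c y)) = cinner x (adj c (a y))" .
  qed
  thus ?thesis unfolding commutant_def using adj_BK[OF c_BK] by (auto simp: fun_eq_iff)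
qed

lemma vN_algebra_comp:
  assumes vN: "vN_algebra B" and "a \<in> B" "b \<in> B"
  shows "a \<circ> b \<in> B"
proof -
  have B: "B \<subseteq> BK" "commutant (commutant B) = B" using vN by (auto simp: vN_algebra_def)
  have "c \<circ> (a \<circ> b) = (a \<circ> b) \<circ> c" if "c \<in> commutant B" for c
  proof -
    have "c \<circ> a = a \<circ> c" "c \<circ> b = b \<circ> c"
      using that assms(2,3) B(2) unfolding commutant_def by blast+
    thus ?thesis by (metis comp_assoc)
  qed
  moreover have "a \<circ> b \<in> BK" using B(1) assms(2,3) by (blast intro: BK_comp)
  ultimately have "a \<circ> b \<in> commutant (commutant B)" unfolding commutant_def by blast
  thus ?thesis using B(2) by simp
qed

lemma op_le_antisym:
  assumes "a \<in> BK" "b \<in> BK" "op_le a b" "op_le b a"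
  shows "a = b"
proof -
  have "cinner x (b x - a x) = 0" for x
  proof -
    have "Im (cinner x (b x - a x)) = 0" "0 \<le> Re (cinner x (b x - a x))" "0 \<le> Re (cinner x (a x - b x))"
      using assms(3,4) unfolding op_le_def pos_op_def by auto
    moreover have "cinner x (a x - b x) = - cinner x (b x - a x)" by (simp add: cinner_diff_right)
    ultimately show ?thesis by (simp add: complex_eq_iff)
  qed
  thus ?thesis using quadratic_form_zero_imp_zero[OF BK_diff_fun[OF assms(2,1)]] by (simp add: fun_eq_iff)
qed

lemma central_carrier_eqI:
  assumes "is_central_carrier B p q"
  shows "central_carrier B p = q"
  unfolding central_carrier_def
proof (rule the_equality)
  fix q' assume "is_central_carrier B p q'"
  with assms show "q' = q"
    unfolding is_central_carrier_def is_projection_def by (blast intro: op_le_antisym)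
qed fact

lemma proj_op_le:
  assumes N: "closed_subspace N" and q: "is_projection q" and fix_N: "\<And>w. w \<in> N \<Longrightarrow> q w = w"
  shows "op_le (proj N) q"
  unfolding op_le_def pos_op_def
proof
  fix x
  have q_BK: "q \<in> BK" and "q \<circ> q = q" "adj q = q" using q unfolding is_projection_def by auto
  have qq: "q (q y) = q y" for y by (metis \<open>q \<circ> q = q\<close> comp_apply)
  have q_sa: "cinner (q y) z = cinner y (q z)" for y z by (metis \<open>adj q = q\<close> adj_cinner[OF q_BK])
  have proj_q: "proj N (q x) = proj N x"
  proof (rule proj_unique[OF N proj_in[OF N]])
    fix u assume "u \<in> N"
    have "cinner u (q x - proj N x) = cinner u (q x - x) + cinner u (x - proj N x)"
      by (simp add: cinner_simps)
    also have "\<dots> = 0"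
      using proj_orthogonal[OF N \<open>u \<in> N\<close>] fix_N[OF \<open>u \<in> N\<close>] q_sa[of u x] by (simp add: cinner_diff_right)
    finally show "cinner u (q x - proj N x) = 0" .
  qed
  define z where "z = q x - proj N x"
  have "q z = z" unfolding z_def using BK_diff[OF q_BK] qq fix_N[OF proj_in[OF N]] by simp
  have "cinner (proj N x) z = 0"
    using proj_orthogonal[OF N proj_in[OF N], of x "q x"] by (simp add: z_def proj_q)
  hence "cinner x z = cinner z z"
    using q_sa[of x z] \<open>q z = z\<close> by (simp add: z_def cinner_simps)
  thus "Im (cinner x (q x - proj N x)) = 0 \<and> 0 \<le> Re (cinner x (q x - proj N x))"
    by (simp add: z_def[symmetric])
qed

lemma proj_closed_span_orbit_central:
  assumes vN: "vN_algebra B" and p: "p \<in> B"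
  defines "V \<equiv> {b h | b h. b \<in> B \<and> h \<in> range p}"
  shows "proj (closed_span V) \<in> B \<inter> commutant B"
proof -
  have B: "B \<subseteq> BK" "\<And>a. a \<in> B \<Longrightarrow> adj a \<in> B" "commutant (commutant B) = B"
    using vN by (auto simp: vN_algebra_def)
  have "proj (closed_span V) \<in> commutant B"
  proof (rule proj_closed_span_in_commutant[OF B(1,2)])
    fix a v assume "a \<in> B" "v \<in> V"
    then obtain b y where "v = b (p y)" "b \<in> B" unfolding V_def by blast
    hence "a v = (a \<circ> b) (p y)" "a \<circ> b \<in> B" using vN_algebra_comp[OF vN \<open>a \<in> B\<close>] by auto
    thus "a v \<in> V" unfolding V_def by blast
  qed
  moreover have "proj (closed_span V) \<in> commutant (commutant B)"
  proof (rule proj_closed_span_in_commutant[OF commutant_subset_BK commutant_adj[OF B(1,2)]])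
    fix c v assume "c \<in> commutant B" "v \<in> V"
    then obtain b y where "v = b (p y)" "b \<in> B" unfolding V_def by blast
    hence "c v = b (p (c y))"
      using commutant_apply[OF \<open>c \<in> commutant B\<close> \<open>b \<in> B\<close>, of "p y"]
        commutant_apply[OF \<open>c \<in> commutant B\<close> p, of y] by simp
    thus "c v \<in> V" using \<open>b \<in> B\<close> unfolding V_def by blast
  qed
  ultimately show ?thesis using B(3) by blast
qed

lemma proj_closed_span_orbit_le:
  assumes q: "q \<in> commutant B" "is_projection q" "q \<circ> p = p"
  defines "V \<equiv> {b h | b h. b \<in> B \<and> h \<in> range p}"
  shows "op_le (proj (closed_span V)) q"
proof (rule proj_op_le[OF closed_subspace_closed_span q(2)])
  have "q v - id v = 0" if "v \<in> V" for v
  proof -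
    obtain b y where "v = b (p y)" "b \<in> B" using \<open>v \<in> V\<close> unfolding V_def by blast
    moreover have "q (p y) = p y" using q(3) by (metis comp_apply)
    ultimately show ?thesis using commutant_apply[OF q(1), of b "p y"] by simp
  qed
  moreover have "(\<lambda>x. q x - id x) \<in> BK"
    using q(2) BK_diff_fun BK_id unfolding is_projection_def by blast
  ultimately show "q w = w" if "w \<in> closed_span V" for w
    using closed_span_kernel[of "\<lambda>x. q x - id x" V w] \<open>w \<in> closed_span V\<close> by simp
qed

lemma central_carrier_eq_proj_closed_span_orbit:
  assumes vN: "vN_algebra B" and p: "p \<in> B" "is_projection p"
  shows "central_carrier B p = proj (closed_span {b h | b h. b \<in> B \<and> h \<in> range p})"
    (is "_ = proj (closed_span ?V)")
proof (rule central_carrier_eqI)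
  let ?Q = "proj (closed_span ?V)"
  have "?Q (p x) = p x" for x
  proof -
    have "p (p x) \<in> ?V" using p(1) by blast
    hence "p (p x) \<in> closed_span ?V" by (rule subsetD[OF closed_span_superset])
    moreover have "p (p x) = p x" using p(2) by (simp add: is_projection_def fun_eq_iff)
    ultimately show ?thesis using proj_id[OF closed_subspace_closed_span] by simp
  qed
  hence "?Q \<circ> p = p" by (simp add: fun_eq_iff)
  moreover have "?Q \<in> B \<inter> commutant B" by (rule proj_closed_span_orbit_central[OF vN p(1)])
  moreover have "is_projection ?Q" by (rule proj_is_projection[OF closed_subspace_closed_span])
  moreover have "op_le ?Q q" if "q \<in> B \<inter> commutant B \<and> is_projection q \<and> q \<circ> p = p" for q
    using that proj_closed_span_orbit_le[of q B p] by blast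
  ultimately show "is_central_carrier B p ?Q" unfolding is_central_carrier_def by blast
qed

section \<open>Operators commuting with \<open>B(H)\<close>\<close>

definition rank_one :: "'a::chilbert \<Rightarrow> 'a \<Rightarrow> 'a \<Rightarrow> 'a" where
  "rank_one h k = (\<lambda>x. cinner h x *\<^sub>C k)"

lemma rank_one_BK: "rank_one h k \<in> BK"
proof (rule BKI[where M = "cnorm h * cnorm k"])
  fix x
  have "cmod (cinner h x) * cnorm k \<le> cnorm h * cnorm x * cnorm k"
    by (rule mult_right_mono[OF cinner_Cauchy_Schwarz cnorm_ge0])
  thus "cnorm (rank_one h k x) \<le> cnorm h * cnorm k * cnorm x"
    by (simp add: rank_one_def cnorm_scaleC mult_ac)
qed (simp_all add: rank_one_def cinner_simps scaleC_add_left scaleC_scaleC)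

lemma rank_one_ops_on:
  assumes "closed_subspace H" "h \<in> H" "k \<in> H"
  shows "rank_one h k \<in> ops_on H"
  unfolding ops_on_def using rank_one_BK closed_subspaceD(3)[OF assms(1,3)] assms(2)
  by (auto simp: rank_one_def)

lemma commutes_with_rank_one_imp_scalar:
  assumes c: "c \<in> BK" and comm: "\<And>h k. h \<in> H \<Longrightarrow> k \<in> H \<Longrightarrow> rank_one h k \<circ> c = c \<circ> rank_one h k"
  shows "\<exists>\<gamma>. \<forall>k\<in>H. c k = \<gamma> *\<^sub>C k"
proof (cases "\<exists>h\<in>H. h \<noteq> 0")
  case False
  thus ?thesis using BK_zero[OF c] by (intro exI[of _ 0]) auto
next
  case True
  then obtain h where h: "h \<in> H" "h \<noteq> 0" by blast
  have "c k = (cinner h (c h) / cinner h h) *\<^sub>C k" if "k \<in> H" for k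
  proof -
    have "rank_one h k (c h) = c (rank_one h k h)" using comm[OF h(1) that] by (metis comp_apply)
    hence "cinner h (c h) *\<^sub>C k = cinner h h *\<^sub>C c k" by (simp add: rank_one_def BK_scaleC[OF c])
    hence "(1 / cinner h h) *\<^sub>C (cinner h (c h) *\<^sub>C k) = c k"
      using h(2) by (simp add: scaleC_scaleC scaleC_one)
    thus ?thesis by (simp add: scaleC_scaleC)
  qed
  thus ?thesis by blast
qed

lemma commutant_scalar_on_closed_span:
  assumes c: "c \<in> commutant B" and scalar: "\<And>h. h \<in> H \<Longrightarrow> c h = \<gamma> *\<^sub>C h" and "B \<subseteq> BK"
    and w: "w \<in> closed_span {b h | b h. b \<in> B \<and> h \<in> H}"
  shows "c w = \<gamma> *\<^sub>C w"
proof -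
  have "c \<in> BK" using c commutant_subset_BK by blast
  have "(\<lambda>x. c x - \<gamma> *\<^sub>C x) w = 0"
  proof (rule closed_span_kernel[OF BK_diff_fun[OF \<open>c \<in> BK\<close> BK_scaleC_id] _ w])
    fix v assume "v \<in> {b h | b h. b \<in> B \<and> h \<in> H}"
    then obtain b h where v: "v = b h" and "b \<in> B" "h \<in> H" by blast
    have "c (b h) = b (c h)" using commutant_apply[OF c \<open>b \<in> B\<close>] by simp
    also have "\<dots> = \<gamma> *\<^sub>C b h"
      using \<open>b \<in> B\<close> \<open>B \<subseteq> BK\<close> by (simp add: scalar[OF \<open>h \<in> H\<close>] BK_scaleC subsetD)
    finally show "(\<lambda>x. c x - \<gamma> *\<^sub>C x) v = 0" by (simp add: v)
  qed
  thus ?thesis by simp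
qed

lemma bicommutant_eq_BK_if_commutant_scalar:
  assumes "\<And>c. c \<in> commutant B \<Longrightarrow> \<exists>\<gamma>. \<forall>x. c x = \<gamma> *\<^sub>C x"
  shows "commutant (commutant B) = BK"
proof -
  have "c \<circ> f = f \<circ> c" if f: "f \<in> BK" and c: "c \<in> commutant B" for f c
  proof -
    obtain \<gamma> where "\<And>x. c x = \<gamma> *\<^sub>C x" using assms[OF c] by blast
    thus ?thesis using BK_scaleC[OF f] by (simp add: fun_eq_iff)
  qed
  hence "BK \<subseteq> commutant (commutant B)" unfolding commutant_def[of "commutant B"] by blast
  thus ?thesis using commutant_subset_BK by blast
qed

lemma commutant_scalar_on_compressed_subspace:
  assumes H: "closed_subspace H" and vN: "vN_algebra B" and p: "p \<in> B"
    and compression: "ops_on H = {p \<circ> b \<circ> p | b. b \<in> B}" and c: "c \<in> commutant B"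
  shows "\<exists>\<gamma>. \<forall>h\<in>H. c h = \<gamma> *\<^sub>C h"
proof (rule commutes_with_rank_one_imp_scalar)
  show "c \<in> BK" using c commutant_subset_BK by blast
  fix h k assume "h \<in> H" "k \<in> H"
  then obtain b where "b \<in> B" "rank_one h k = p \<circ> b \<circ> p"
    using rank_one_ops_on[OF H] compression by blast
  hence "rank_one h k \<in> B" using vN_algebra_comp[OF vN] p by simp
  thus "rank_one h k \<circ> c = c \<circ> rank_one h k" using c unfolding commutant_def by blast
qed

text \<open>Neither the CP-semigroup \<open>T\<close> nor the E-semigroup \<open>\<theta>\<close> enters: the argument only
  uses that the compression \<open>p B p\<close> is all of \<open>B(H)\<close> and that \<open>p\<close> has central carrier \<open>1\<close>.\<close>
theorem lemma2p4:
  fixes H :: "'k::chilbert set"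
    and T :: "'s::comm_monoid_add \<Rightarrow> ('k \<Rightarrow> 'k) \<Rightarrow> ('k \<Rightarrow> 'k)"
    and p :: "'k \<Rightarrow> 'k"
    and B :: "('k \<Rightarrow> 'k) set"
    and \<theta> :: "'s \<Rightarrow> ('k \<Rightarrow> 'k) \<Rightarrow> ('k \<Rightarrow> 'k)"
  assumes "closed_subspace H"
    and "cp_semigroup (ops_on H) T"
    and "minimal_dilation H (ops_on H) T p B \<theta>"
  shows "B = BK"
proof -
  have dilation: "dilation H (ops_on H) T p B \<theta>" and carrier: "central_carrier B p = id"
    using assms(3) unfolding minimal_dilation_def by simp_all
  have vN: "vN_algebra B" and p: "p \<in> B" "is_projection p" "range p = H"
    and compression: "ops_on H = {p \<circ> b \<circ> p | b. b \<in> B}"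
    using dilation unfolding dilation_def by simp_all
  define V where "V = {b h | b h. b \<in> B \<and> h \<in> H}"
  have "proj (closed_span V) = id"
    using central_carrier_eq_proj_closed_span_orbit[OF vN p(1,2)] carrier p(3) by (simp add: V_def)
  hence span_V: "x \<in> closed_span V" for x
    using proj_in[OF closed_subspace_closed_span, of V x] by simp
  have "\<exists>\<gamma>. \<forall>x. c x = \<gamma> *\<^sub>C x" if c: "c \<in> commutant B" for c
  proof -
    obtain \<gamma> where "\<And>h. h \<in> H \<Longrightarrow> c h = \<gamma> *\<^sub>C h"
      using commutant_scalar_on_compressed_subspace[OF assms(1) vN p(1) compression c] by blast
    hence "c x = \<gamma> *\<^sub>C x" for x
      using commutant_scalar_on_closed_span[OF c _ _ span_V[unfolded V_def]] vN
      unfolding vN_algebra_def by blast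
    thus ?thesis by blast
  qed
  hence "commutant (commutant B) = BK" by (rule bicommutant_eq_BK_if_commutant_scalar)
  thus ?thesis using vN unfolding vN_algebra_def by simp
qed

end
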